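(* In the self-oscillator setting described in the context, for all $\tau\ge0$ and all $l\in\mathbb N_{\ge0}$, $$\tfrac12\int_0^\tau P(t+\tau_l,+1|\tau_l)\,dt=\int_0^\tau\|\vec V_{\mathrm C}\|_{w,1}(t,l)\,dt\le\varepsilon^{\mathrm{quality}}_l(\tau),$$ $$\varepsilon^{\mathrm{quality}}_l(\tau)\le(\|V_{\mathrm C}\|\tau)^{3/4}\Big(\int_0^\tau\|\vec V_{\mathrm C}\|_{w,1}(t,l)\,dt\Big)^{1/4}=\frac{(\|V_{\mathrm C}\|\tau)^{3/4}}{2^{1/4}}\Big(\int_0^\tau P(t+\tau_l,+1|\tau_l)\,dt\Big)^{1/4},$$ where $\|\cdot\|$ is the operator norm.
   Context: Self-oscillator setting: $\mathcal H_{\mathrm S},\mathcal H_{\mathrm C}$ are finite-dimensional; $H_{\mathrm{SC}}$ is a self-adjoint operator on $\mathcal H_{\mathrm S}\otimes\mathcal H_{\mathrm C}$ with smallest eigenvalue $0$; $\{J^j_{\mathrm C}\}_j$ are finitely many operators on $\mathcal H_{\mathrm C}$, $V_{\mathrm C}:=\tfrac12\sum_jJ^{j\dagger}_{\mathrm C}J^j_{\mathrm C}$, with spectral decomposition $V_{\mathrm C}=\sum_jv_j|v_j\rangle\langle v_j|$, $v_j\ge0$. The renewal map is $\mathcal D^{\mathrm{re}}_{\mathrm C}(X):=\sum_j(\mathbb 1\otimes J^j_{\mathrm C})X(\mathbb 1\otimes J^j_{\mathrm C})^\dagger$, assumed to satisfy: there is a fixed density matrix $\rho^0_{\mathrm C}$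 such that $\sum_jJ^j_{\mathrm C}\sigma J^{j\dagger}_{\mathrm C}$ is a nonnegative multiple of $\rho^0_{\mathrm C}$ for every density matrix $\sigma$ on $\mathcal H_{\mathrm C}$. Let $\mathcal L^{\mathrm{no\,re}}(X):=-i[H_{\mathrm{SC}},X]-\{\mathbb 1\otimes V_{\mathrm C},X\}$. Given renewal times $0=\tau_0<\tau_1<\tau_2<\cdots$, define recursively $\rho_{\mathrm{SC}}(\tau_0|\tau_0):=\rho_{\mathrm S}(0)\otimes\rho^0_{\mathrm C}$ (for some density matrix $\rho_{\mathrm S}(0)$), $\rho_{\mathrm{SC}}(\!(t+\tau_l|\tau_l)\!):=e^{t\mathcal L^{\mathrm{no\,re}}}(\rho_{\mathrm{SC}}(\tau_l|\tau_l))$ for $t\ge0$, and for $l\ge1$, $\rho_{\mathrm{SC}}(\tau_l|\tau_l):=\mathcal D^{\mathrm{re}}_{\mathrm C}(\rho_{\mathrm{SC}}(\!(\tau_l|\tau_{l-1})\!))/\mathrm{tr}[\mathcal D^{\mathrm{re}}_{\mathrm C}(\rho_{\mathrm{SC}}(\!(\tau_l|\tau_{l-1})\!))]$. Define $P(t+\tau_l,+1|\tau_l):=\mathrm{tr}[\mathcal D^{\mathrm{re}}_{\mathrm C}(\rho_{\mathrm{SC}}(\!(t+\tau_l|\tau_l)\!))]$. With $p_j(t,l):=\mathrm{tr}[(\mathbb 1_{\mathrm S}\otimes|v_j\rangle\langle v_j|)\rho_{\mathrm{SC}}(\!(t+\tau_l|\tau_l)\!)]$, define the weighted norms $\|\vec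 V_{\mathrm C}\|_{w,q}(t,l):=(\sum_jv_j^q\,p_j(t,l))^{1/q}$ and $\varepsilon^{\mathrm{quality}}_l(\tau):=\int_0^\tau\|\vec V_{\mathrm C}\|_{w,2}(t,l)\,dt$. *)

theory Defs
  imports "HOL-Analysis.Analysis"
begin

text \<open>Operators on a finite-dimensional Hilbert space with orthonormal basis indexed
  by a finite type 'n are complex matrices of type complex^'n^'n.  The tensor product
  space H_S (x) H_C is indexed by the product type 's \<times> 'c.\<close>

type_synonym 'n cmat = "complex^'n^'n"

definition cadj :: "('n::finite) cmat \<Rightarrow> 'n cmat" where
  "cadj M = (\<chi> i j. cnj (M $ j $ i))"

definition csmult :: "complex \<Rightarrow> ('n::finite) cmat \<Rightarrow> 'n cmat" where
  "csmult c M = (\<chi> i j. c * M $ i $ j)"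

definition cinner :: "complex^('n::finite) \<Rightarrow> complex^'n \<Rightarrow> complex" where
  "cinner x y = (\<Sum>i\<in>UNIV. cnj (x $ i) * y $ i)"

definition ketbra :: "complex^('n::finite) \<Rightarrow> complex^'n \<Rightarrow> 'n cmat" where
  "ketbra x y = (\<chi> i j. x $ i * cnj (y $ j))"

definition tensor :: "('s::finite) cmat \<Rightarrow> ('c::finite) cmat \<Rightarrow> ('s \<times> 'c) cmat" where
  "tensor A B = (\<chi> p q. A $ fst p $ fst q * B $ snd p $ snd q)"

definition hermitian :: "('n::finite) cmat \<Rightarrow> bool" where
  "hermitian M \<longleftrightarrow> cadj M = M"

definition psd :: "('n::finite) cmat \<Rightarrow> bool" where
  "psd M \<longleftrightarrow> hermitian M \<and> (\<forall>x. 0 \<le> Re (cinner x (M *v x)))"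

definition density :: "('n::finite) cmat \<Rightarrow> bool" where
  "density M \<longleftrightarrow> psd M \<and> trace M = 1"

definition smallest_eig_zero :: "('n::finite) cmat \<Rightarrow> bool" where
  "smallest_eig_zero H \<longleftrightarrow> psd H \<and> (\<exists>x. x \<noteq> 0 \<and> H *v x = 0)"

definition opnorm :: "('n::finite) cmat \<Rightarrow> real" where
  "opnorm M = onorm (\<lambda>x. M *v x)"

definition superop_exp :: "real \<Rightarrow> (('n::finite) cmat \<Rightarrow> 'n cmat) \<Rightarrow> 'n cmat \<Rightarrow> 'n cmat" where
  "superop_exp t L X = (\<Sum>k. (t ^ k / fact k) *\<^sub>R (L ^^ k) X)"

definition VC :: "('k::finite \<Rightarrow> ('c::finite) cmat) \<Rightarrow> 'c cmat" where
  "VC J = csmult (1/2) (\<Sum>j\<in>UNIV. cadj (J j) ** J j)"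

definition Lnore :: "(('s::finite) \<times> ('c::finite)) cmat \<Rightarrow> ('k::finite \<Rightarrow> 'c cmat) \<Rightarrow> ('s \<times> 'c) cmat \<Rightarrow> ('s \<times> 'c) cmat" where
  "Lnore H J X = csmult (- \<i>) (H ** X - X ** H)
      - (tensor (mat 1) (VC J) ** X + X ** tensor (mat 1) (VC J))"

definition Dre :: "('k::finite \<Rightarrow> ('c::finite) cmat) \<Rightarrow> (('s::finite) \<times> 'c) cmat \<Rightarrow> ('s \<times> 'c) cmat" where
  "Dre J X = (\<Sum>j\<in>UNIV. tensor (mat 1) (J j) ** X ** cadj (tensor (mat 1) (J j)))"

fun rho_ren :: "(('s::finite) \<times> ('c::finite)) cmat \<Rightarrow> ('k::finite \<Rightarrow> 'c cmat) \<Rightarrow> 's cmat \<Rightarrow> 'c cmat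
     \<Rightarrow> (nat \<Rightarrow> real) \<Rightarrow> nat \<Rightarrow> ('s \<times> 'c) cmat" where
  "rho_ren H J rhoS0 rho0 tau 0 = tensor rhoS0 rho0"
| "rho_ren H J rhoS0 rho0 tau (Suc l) =
     (let Y = Dre J (superop_exp (tau (Suc l) - tau l) (Lnore H J) (rho_ren H J rhoS0 rho0 tau l))
      in csmult (1 / trace Y) Y)"

definition rho_ev :: "(('s::finite) \<times> ('c::finite)) cmat \<Rightarrow> ('k::finite \<Rightarrow> 'c cmat) \<Rightarrow> 's cmat \<Rightarrow> 'c cmat
     \<Rightarrow> (nat \<Rightarrow> real) \<Rightarrow> nat \<Rightarrow> real \<Rightarrow> ('s \<times> 'c) cmat" where
  "rho_ev H J rhoS0 rho0 tau l t = superop_exp t (Lnore H J) (rho_ren H J rhoS0 rho0 tau l)"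

text \<open>P(t + tau_l, +1 | tau_l) (a real number; the trace is real here)\<close>
definition Pjump :: "(('s::finite) \<times> ('c::finite)) cmat \<Rightarrow> ('k::finite \<Rightarrow> 'c cmat) \<Rightarrow> 's cmat \<Rightarrow> 'c cmat
     \<Rightarrow> (nat \<Rightarrow> real) \<Rightarrow> nat \<Rightarrow> real \<Rightarrow> real" where
  "Pjump H J rhoS0 rho0 tau l t = Re (trace (Dre J (rho_ev H J rhoS0 rho0 tau l t)))"

definition pj :: "(('s::finite) \<times> ('c::finite)) cmat \<Rightarrow> ('k::finite \<Rightarrow> 'c cmat) \<Rightarrow> 's cmat \<Rightarrow> 'c cmat
     \<Rightarrow> (nat \<Rightarrow> real) \<Rightarrow> ('c \<Rightarrow> complex^'c) \<Rightarrow> 'c \<Rightarrow> nat \<Rightarrow> real \<Rightarrow> real" where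
  "pj H J rhoS0 rho0 tau vv j l t =
     Re (trace (tensor (mat 1) (ketbra (vv j) (vv j)) ** rho_ev H J rhoS0 rho0 tau l t))"

definition wnorm :: "(('s::finite) \<times> ('c::finite)) cmat \<Rightarrow> ('k::finite \<Rightarrow> 'c cmat) \<Rightarrow> 's cmat \<Rightarrow> 'c cmat
     \<Rightarrow> (nat \<Rightarrow> real) \<Rightarrow> ('c \<Rightarrow> real) \<Rightarrow> ('c \<Rightarrow> complex^'c) \<Rightarrow> nat \<Rightarrow> nat \<Rightarrow> real \<Rightarrow> real" where
  "wnorm H J rhoS0 rho0 tau v vv q l t =
     (\<Sum>j\<in>UNIV. v j ^ q * pj H J rhoS0 rho0 tau vv j l t) powr (1 / real q)"

definition eps_quality :: "(('s::finite) \<times> ('c::finite)) cmat \<Rightarrow> ('k::finite \<Rightarrow> 'c cmat) \<Rightarrow> 's cmat \<Rightarrow> 'c cmat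
     \<Rightarrow> (nat \<Rightarrow> real) \<Rightarrow> ('c \<Rightarrow> real) \<Rightarrow> ('c \<Rightarrow> complex^'c) \<Rightarrow> nat \<Rightarrow> real \<Rightarrow> real" where
  "eps_quality H J rhoS0 rho0 tau v vv l T =
     integral {0..T} (\<lambda>t. wnorm H J rhoS0 rho0 tau v vv 2 l t)"

end

theory Submission
  imports Defs
begin

text \<open>Let p_j(t) be the population of the j-th eigenvector of V_C in the state evolved
  without renewal.  The jump probability is tr[D(\<rho>)] = 2 tr[(1 \<otimes> V_C) \<rho>] = 2 sum_j v_j p_j(t),
  which is the equality.  The generator acts as X \<mapsto> K X + X K^* with K = -i H - 1 \<otimes> V_C,
  so e^{tL} is the congruence by e^{tK}: it keeps states positive, and the trace is
  nonincreasing because its derivative is -2 tr[(1 \<otimes> V_C) \<rho>] \<le> 0.  Hence (p_j(t))_j is a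
  sub-probability vector, and Jensen's inequality gives ||V||_{w,1} \<le> ||V||_{w,2}.  Since
  v_j^2 \<le> ||V_C|| v_j, Cauchy-Schwarz in t bounds \<epsilon> by sqrt(||V_C|| \<tau> \<integral> ||V||_{w,1}), and
  \<integral> ||V||_{w,1} \<le> ||V_C|| \<tau> splits this square root into the powers 3/4 and 1/4.\<close>

subsection \<open>Matrices and the inner product\<close>

lemma cadj_cadj [simp]: "cadj (cadj A) = A"
  by (simp add: cadj_def vec_eq_iff)

lemma cadj_mult: "cadj (A ** B) = cadj B ** cadj (A::'n::finite cmat)"
  by (simp add: cadj_def matrix_matrix_mult_def vec_eq_iff mult.commute)

lemma cadj_add: "cadj (A + B) = cadj A + cadj (B::'n::finite cmat)"
  by (simp add: cadj_def vec_eq_iff)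

lemma cadj_diff: "cadj (A - B) = cadj A - cadj (B::'n::finite cmat)"
  by (simp add: cadj_def vec_eq_iff)

lemma cadj_scaleR: "cadj (r *\<^sub>R A) = r *\<^sub>R cadj (A::'n::finite cmat)"
  by (simp add: cadj_def vec_eq_iff)

lemma cadj_csmult: "cadj (csmult c A) = csmult (cnj c) (cadj (A::'n::finite cmat))"
  by (simp add: cadj_def csmult_def vec_eq_iff)

lemma cadj_sum: "cadj (sum f S) = (\<Sum>x\<in>S. cadj (f x :: 'n::finite cmat))"
  by (simp add: cadj_def vec_eq_iff sum_component)

lemma cadj_mat1 [simp]: "cadj (mat 1 :: 'n::finite cmat) = mat 1"
  by (simp add: cadj_def mat_def vec_eq_iff)

lemma cadj_ketbra: "cadj (ketbra u v) = ketbra v u"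
  by (simp add: ketbra_def cadj_def vec_eq_iff)

lemma bounded_linear_cadj: "bounded_linear (cadj :: 'n::finite cmat \<Rightarrow> 'n cmat)"
  unfolding linear_conv_bounded_linear[symmetric]
  by (intro linearI) (simp_all add: cadj_add cadj_scaleR)

lemma csmult_mult_left: "csmult c A ** B = csmult c (A ** (B::'n::finite cmat))"
  by (simp add: csmult_def matrix_matrix_mult_def vec_eq_iff sum_distrib_left algebra_simps)

lemma csmult_mult_right: "A ** csmult c B = csmult c (A ** (B::'n::finite cmat))"
  by (simp add: csmult_def matrix_matrix_mult_def vec_eq_iff sum_distrib_left algebra_simps)

lemma csmult_csmult: "csmult a (csmult b A) = csmult (a * b) (A::'n::finite cmat)"
  by (simp add: csmult_def vec_eq_iff)

lemma csmult_one [simp]: "csmult 1 A = (A::'n::finite cmat)"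
  by (simp add: csmult_def vec_eq_iff)

lemma csmult_sum: "csmult c (sum f S) = (\<Sum>x\<in>S. csmult c (f x :: 'n::finite cmat))"
  by (simp add: csmult_def vec_eq_iff sum_component sum_distrib_left)

lemma matrix_add_rdistrib: "(A + B) ** C = A ** C + B ** (C::'n::finite cmat)"
  by (simp add: matrix_matrix_mult_def vec_eq_iff sum.distrib algebra_simps)

lemma matrix_diff_ldistrib: "C ** (A - B) = C ** A - C ** (B::'n::finite cmat)"
  by (simp add: matrix_matrix_mult_def vec_eq_iff sum_subtractf algebra_simps)

lemma matrix_diff_rdistrib: "(A - B) ** C = A ** C - B ** (C::'n::finite cmat)"
  by (simp add: matrix_matrix_mult_def vec_eq_iff sum_subtractf algebra_simps)

lemma uminus_matrix_mult: "(- A) ** B = - (A ** (B::'n::finite cmat))"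
  by (simp add: matrix_matrix_mult_def vec_eq_iff sum_negf)

lemma csmult_diff: "csmult c (A - B) = csmult c A - csmult c (B::'n::finite cmat)"
  by (simp add: csmult_def vec_eq_iff algebra_simps)

lemma csmult_uminus: "csmult (- c) A = - csmult c (A::'n::finite cmat)"
  by (simp add: csmult_def vec_eq_iff)

lemma matrix_sum_mult_left: "sum f S ** B = (\<Sum>x\<in>S. f x ** (B::'n::finite cmat))"
  by (simp add: matrix_matrix_mult_def vec_eq_iff sum_component sum_distrib_right sum.swap[of _ S])

lemma trace_csmult: "trace (csmult c A) = c * trace (A::'n::finite cmat)"
  by (simp add: trace_def csmult_def sum_distrib_left)

lemma trace_scaleR: "trace (r *\<^sub>R A) = of_real r * trace (A::'n::finite cmat)"
  by (simp add: trace_def scaleR_sum_right flip: scaleR_conv_of_real)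

lemma trace_sum: "trace (sum f S) = (\<Sum>x\<in>S. trace (f x :: 'n::finite cmat))"
  by (simp add: trace_def sum_component sum.swap[of _ S])

lemma tensor_mult: "tensor A B ** tensor C D = tensor (A ** C) (B ** (D::'c::finite cmat))"
  for A C :: "'s::finite cmat"
proof -
  have "(tensor A B ** tensor C D) $ p $ q = tensor (A ** C) (B ** D) $ p $ q" for p q
  proof -
    have "(tensor A B ** tensor C D) $ p $ q
       = (\<Sum>r\<in>UNIV \<times> UNIV. A $ fst p $ fst r * B $ snd p $ snd r * (C $ fst r $ fst q * D $ snd r $ snd q))"
      by (simp add: tensor_def matrix_matrix_mult_def UNIV_Times_UNIV)
    also have "\<dots> = (\<Sum>s\<in>UNIV. \<Sum>c\<in>UNIV. (A $ fst p $ s * C $ s $ fst q) * (B $ snd p $ c * D $ c $ snd q))"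
      by (subst sum.cartesian_product) (simp add: split_def algebra_simps)
    also have "\<dots> = tensor (A ** C) (B ** D) $ p $ q"
      by (simp add: tensor_def matrix_matrix_mult_def sum_product)
    finally show ?thesis .
  qed
  then show ?thesis by (simp add: vec_eq_iff)
qed

lemma cadj_tensor: "cadj (tensor A B) = tensor (cadj A) (cadj (B::'c::finite cmat))"
  for A :: "'s::finite cmat"
  by (simp add: cadj_def tensor_def vec_eq_iff)

lemma tensor_mat1: "tensor (mat 1 :: 's::finite cmat) (mat 1 :: 'c::finite cmat) = mat 1"
  by (simp add: tensor_def mat_def vec_eq_iff prod_eq_iff)

lemma tensor_sum_left: "tensor (sum f S) B = (\<Sum>x\<in>S. tensor (f x :: 's::finite cmat) (B :: 'c::finite cmat))"
  by (simp add: tensor_def vec_eq_iff sum_component sum_distrib_right)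

lemma tensor_sum_right: "tensor A (sum f S) = (\<Sum>x\<in>S. tensor A (f x :: 'c::finite cmat))"
  for A :: "'s::finite cmat"
  by (simp add: tensor_def vec_eq_iff sum_component sum_distrib_left)

lemma tensor_csmult_right: "tensor A (csmult c B) = csmult c (tensor A (B :: 'c::finite cmat))"
  for A :: "'s::finite cmat"
  by (simp add: tensor_def csmult_def vec_eq_iff algebra_simps)

lemma trace_tensor: "trace (tensor A B) = trace A * trace (B :: 'c::finite cmat)"
  for A :: "'s::finite cmat"
  by (simp add: trace_def tensor_def sum_product sum.cartesian_product split_def flip: UNIV_Times_UNIV)

definition kron :: "complex^('s::finite) \<Rightarrow> complex^('c::finite) \<Rightarrow> complex^('s \<times> 'c)" where
  "kron a b = (\<chi> p. a $ fst p * b $ snd p)"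

lemma tensor_ketbra: "tensor (ketbra a a) (ketbra b b) = ketbra (kron a b) (kron a b)"
  by (simp add: tensor_def ketbra_def kron_def vec_eq_iff algebra_simps)

lemma cinner_add_left: "cinner (x + y) z = cinner x z + cinner y z"
  by (simp add: cinner_def sum.distrib algebra_simps)

lemma cinner_add_right: "cinner x (y + z) = cinner x y + cinner x z"
  by (simp add: cinner_def sum.distrib algebra_simps)

lemma cinner_diff_right: "cinner x (y - z) = cinner x y - cinner x z"
  by (simp add: cinner_def sum_subtractf algebra_simps)

lemma cinner_scale_left: "cinner (c *s x) y = cnj c * cinner x y"
  by (simp add: cinner_def sum_distrib_left algebra_simps)

lemma cinner_scale_right: "cinner x (c *s y) = c * cinner x y"
  by (simp add: cinner_def sum_distrib_left algebra_simps)

lemma cnj_cinner: "cnj (cinner x y) = cinner y x"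
  by (simp add: cinner_def mult.commute)

lemma cinner_axis_left: "cinner (axis a 1) z = z $ a"
proof -
  have eq: "(\<lambda>i. cnj (axis a 1 $ i) * z $ i) = (\<lambda>i. if i = a then z $ a else 0)"
    by (auto simp: axis_def)
  show ?thesis unfolding cinner_def eq by simp
qed

lemma cinner_self: "cinner x x = of_real ((norm x)\<^sup>2)"
proof -
  have "cnj (x $ i) * x $ i = of_real ((cmod (x $ i))\<^sup>2)" for i
    by (metis complex_norm_square mult.commute)
  then have "cinner x x = of_real (\<Sum>i\<in>UNIV. (cmod (x $ i))\<^sup>2)"
    by (simp add: cinner_def)
  also have "(\<Sum>i\<in>UNIV. (cmod (x $ i))\<^sup>2) = (norm x)\<^sup>2"
    by (simp add: norm_vec_def L2_set_def sum_nonneg)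
  finally show ?thesis .
qed

lemma cinner_matrix_vector_mult: "cinner x (A *v y) = cinner (cadj A *v x) y"
proof -
  have "cinner x (A *v y) = (\<Sum>i\<in>UNIV. \<Sum>j\<in>UNIV. cnj (x$i) * A$i$j * y$j)"
    by (simp add: cinner_def matrix_vector_mult_def sum_distrib_left mult.assoc)
  also have "\<dots> = (\<Sum>j\<in>UNIV. \<Sum>i\<in>UNIV. cnj (x$i) * A$i$j * y$j)"
    by (rule sum.swap)
  also have "\<dots> = cinner (cadj A *v x) y"
    by (simp add: cinner_def matrix_vector_mult_def cadj_def sum_distrib_left sum_distrib_right mult_ac)
  finally show ?thesis .
qed

lemma matrix_vector_mult_axis: "(M *v axis a 1) $ i = M $ i $ a"
  by (simp add: matrix_vector_mult_def axis_def if_distrib cong: if_cong)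

lemma matrix_vector_mult_scale: "A *v (c *s x) = c *s (A *v (x::complex^'n::finite))"
  by (simp add: matrix_vector_mult_def vec_eq_iff sum_distrib_left algebra_simps)

lemma csmult_matrix_vector_mult: "csmult c A *v x = c *s (A *v (x::complex^'n::finite))"
  by (simp add: csmult_def matrix_vector_mult_def vec_eq_iff sum_distrib_left algebra_simps)

lemma sum_matrix_vector_mult: "sum f S *v x = (\<Sum>k\<in>S. f k *v (x::complex^'n::finite))"
  by (simp add: matrix_vector_mult_def vec_eq_iff sum_component sum_distrib_right sum.swap[of _ S])

lemma ketbra_matrix_vector_mult: "ketbra u v *v x = cinner v x *s u"
  by (simp add: ketbra_def matrix_vector_mult_def cinner_def vec_eq_iff sum_distrib_left mult_ac)

lemma trace_ketbra_mult: "trace (ketbra u u ** X) = cinner u (X *v u)"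
proof -
  have "trace (ketbra u u ** X) = (\<Sum>i\<in>UNIV. \<Sum>k\<in>UNIV. cnj (u$k) * (X$k$i * u$i))"
    by (simp add: trace_def ketbra_def matrix_matrix_mult_def algebra_simps)
  also have "\<dots> = (\<Sum>k\<in>UNIV. \<Sum>i\<in>UNIV. cnj (u$k) * (X$k$i * u$i))"
    by (rule sum.swap)
  also have "\<dots> = cinner u (X *v u)"
    by (simp add: cinner_def matrix_vector_mult_def sum_distrib_left)
  finally show ?thesis .
qed

subsection \<open>Positive semidefinite matrices\<close>

lemma psd_iff: "psd M \<longleftrightarrow> cadj M = M \<and> (\<forall>x. 0 \<le> Re (cinner x (M *v x)))"
  by (simp add: psd_def hermitian_def)

lemma psd_ketbra: "psd (ketbra u u)"
proof -
  have "cinner x (ketbra u u *v x) = cnj (cinner x u) * cinner x u" for x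
    by (simp add: ketbra_matrix_vector_mult cinner_scale_right flip: cnj_cinner[of x u])
  then have "cinner x (ketbra u u *v x) = of_real ((cmod (cinner x u))\<^sup>2)" for x
    by (metis complex_norm_square mult.commute)
  then show ?thesis by (simp add: psd_iff cadj_ketbra)
qed

lemma psd_zero: "psd (0::'n::finite cmat)"
  by (simp add: psd_iff cinner_def cadj_def vec_eq_iff)

lemma psd_mat1: "psd (mat 1 :: 'n::finite cmat)"
  by (simp add: psd_iff cinner_self)

lemma psd_add: "psd A \<Longrightarrow> psd B \<Longrightarrow> psd (A + B)"
  by (simp add: psd_iff cadj_add matrix_vector_mult_add_rdistrib cinner_add_right)

lemma psd_sum: "(\<And>k. k \<in> S \<Longrightarrow> psd (f k)) \<Longrightarrow> psd (sum f S)"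
  by (induction S rule: infinite_finite_induct) (auto intro: psd_add psd_zero)

lemma psd_csmult: "0 \<le> r \<Longrightarrow> psd A \<Longrightarrow> psd (csmult (of_real r) A)"
  by (simp add: psd_iff cadj_csmult csmult_matrix_vector_mult cinner_scale_right)

lemma psd_congruence: "psd X \<Longrightarrow> psd (E ** X ** cadj E)"
proof -
  assume X: "psd X"
  have "cinner x ((E ** X ** cadj E) *v x) = cinner (cadj E *v x) (X *v (cadj E *v x))" for x
    unfolding cinner_matrix_vector_mult[of x E, symmetric]
    by (simp add: matrix_vector_mul_assoc matrix_mul_assoc)
  moreover have "cadj (E ** X ** cadj E) = E ** X ** cadj E"
    using X by (simp add: psd_iff cadj_mult matrix_mul_assoc)
  ultimately show ?thesis using X by (simp add: psd_iff)
qed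

lemma psd_entry_cnj:
  assumes "psd M"
  shows "M $ j $ i = cnj (M $ i $ j)"
proof -
  have "cadj M $ j $ i = M $ j $ i" using assms by (simp add: psd_iff)
  then show ?thesis by (simp add: cadj_def)
qed

lemma psd_diag: "psd M \<Longrightarrow> M $ a $ a = of_real (Re (M $ a $ a)) \<and> 0 \<le> Re (M $ a $ a)"
proof -
  assume M: "psd M"
  have "Im (M $ a $ a) = 0"
    using arg_cong[OF psd_entry_cnj[OF M, of a a], of Im] by simp
  moreover have "0 \<le> Re (cinner (axis a 1) (M *v axis a 1))" using M by (simp add: psd_iff)
  ultimately show ?thesis by (simp add: cinner_axis_left matrix_vector_mult_axis complex_eq_iff)
qed

lemma psd_trace: "psd M \<Longrightarrow> trace M = of_real (Re (trace M)) \<and> 0 \<le> Re (trace M)"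
proof -
  assume M: "psd M"
  have "trace M = (\<Sum>i\<in>UNIV. of_real (Re (M $ i $ i)))"
    unfolding trace_def using psd_diag[OF M] by metis
  then show ?thesis using psd_diag[OF M] by (simp add: sum_nonneg Re_sum)
qed

lemma cinner_add_scale_quadratic:
  "cinner (x + c *s y) (M *v (x + c *s y)) = cinner x (M *v x) + c * cinner x (M *v y)
     + cnj c * cinner y (M *v x) + cnj c * c * cinner y (M *v y)"
  by (simp add: matrix_vector_right_distrib matrix_vector_mult_scale cinner_add_left cinner_add_right
      cinner_scale_left cinner_scale_right distrib_left)

lemma psd_zero_diag_imp_zero_column:
  assumes M: "psd M" and d: "M $ a $ a = 0"
  shows "M $ i $ a = 0"
proof (rule ccontr)
  assume c0: "M $ i $ a \<noteq> 0"
  define c where "c = M $ i $ a"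
  define r where "r = (\<bar>Re (M$i$i)\<bar> + 1) / (2 * (cmod c)\<^sup>2)"
  define z where "z = - (of_real r * cnj c)"
  have rc: "2 * (r * (cmod c)\<^sup>2) = \<bar>Re (M$i$i)\<bar> + 1"
    using c0 by (simp add: r_def c_def)
  have "z * c = - (of_real r * (c * cnj c))" "cnj z * cnj c = - (of_real r * (c * cnj c))"
    by (simp_all add: z_def algebra_simps)
  then have "z * c = - of_real (r * (cmod c)\<^sup>2)" "cnj z * cnj c = - of_real (r * (cmod c)\<^sup>2)"
    by (simp_all only: complex_norm_square[symmetric] of_real_mult)
  moreover have "0 \<le> Re (cinner (axis i 1 + z *s axis a 1) (M *v (axis i 1 + z *s axis a 1)))"
    using M by (simp add: psd_iff)
  ultimately have "0 \<le> Re (M$i$i) - 2 * (r * (cmod c)\<^sup>2)"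
    by (simp add: cinner_add_scale_quadratic cinner_axis_left matrix_vector_mult_axis d c_def
        psd_entry_cnj[OF M, of a i])
  then show False unfolding rc using abs_ge_self[of "Re (M$i$i)"] by linarith
qed

text \<open>One step of a Cholesky decomposition.\<close>

lemma psd_minus_column_ketbra:
  fixes M :: "'n::finite cmat" and a :: 'n
  assumes M: "psd M"
  defines "w \<equiv> \<chi> i. M $ i $ a / of_real (sqrt (Re (M $ a $ a)))"
  shows "psd (M - ketbra w w)" and "(M - ketbra w w) $ a $ j = 0"
proof -
  define d where "d = Re (M $ a $ a)"
  define s where "s = sqrt d"
  define M' where "M' = M - ketbra w w"
  have d: "M $ a $ a = of_real d" "0 \<le> d" using psd_diag[OF M] by (auto simp: d_def)
  have ss: "s * s = d" using d by (simp add: s_def)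
  have w: "w = (\<chi> i. M $ i $ a / of_real s)" by (simp add: w_def s_def d_def)
  have herm': "cadj M' = M'"
    using M by (simp add: M'_def cadj_diff cadj_ketbra psd_iff)
  have column: "M' $ i $ a = 0" for i
  proof (cases "d = 0")
    case True
    then show ?thesis using psd_zero_diag_imp_zero_column[OF M, of a i] d
      by (simp add: M'_def w s_def ketbra_def)
  next
    case False
    then have "s \<noteq> 0" using ss by auto
    then show ?thesis using ss d False
      by (simp add: M'_def w ketbra_def field_simps flip: of_real_mult)
  qed
  have form: "0 \<le> Re (cinner x (M' *v x))" for x
  proof (cases "d = 0")
    case True
    then have "ketbra w w = 0" by (simp add: w s_def ketbra_def vec_eq_iff)
    then show ?thesis using M by (simp add: M'_def psd_iff)
  next
    case False
    with d have dpos: "d > 0" by simp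
    define \<beta> where "\<beta> = (M *v x) $ a"
    define \<alpha> where "\<alpha> = - \<beta> / of_real d"
    have cw: "cinner w x = \<beta> / of_real s"
      by (simp add: cinner_def w \<beta>_def matrix_vector_mult_def psd_entry_cnj[OF M, of _ a]
          sum_divide_distrib)
    have "cinner x (M' *v x) = cinner x (M *v x) - cnj (cinner w x) * cinner w x"
      by (simp add: M'_def matrix_vector_mult_diff_rdistrib ketbra_matrix_vector_mult
          cinner_diff_right cinner_scale_right flip: cnj_cinner[of w x])
    also have "\<dots> = cinner x (M *v x) - cnj \<beta> * \<beta> / of_real d"
      using ss by (simp add: cw flip: of_real_mult)
    finally have M'x: "cinner x (M' *v x) = cinner x (M *v x) - cnj \<beta> * \<beta> / of_real d" .
    have "cinner (M *v axis a 1) x = (\<Sum>i\<in>UNIV. M $ a $ i * x $ i)"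
      by (simp add: cinner_def matrix_vector_mult_axis psd_entry_cnj[OF M, of a])
    also have "\<dots> = \<beta>" by (simp add: \<beta>_def matrix_vector_mult_def)
    finally have "cinner x (M *v axis a 1) = cnj \<beta>" by (metis cnj_cinner)
    then have "cinner (x + \<alpha> *s axis a 1) (M *v (x + \<alpha> *s axis a 1))
        = cinner x (M *v x) + \<alpha> * cnj \<beta> + cnj \<alpha> * \<beta> + cnj \<alpha> * \<alpha> * of_real d"
      by (simp add: cinner_add_scale_quadratic cinner_axis_left matrix_vector_mult_axis d \<beta>_def)
    also have "\<dots> = cinner x (M' *v x)"
      using dpos by (simp add: M'x \<alpha>_def field_simps)
    finally have "cinner x (M' *v x) = cinner (x + \<alpha> *s axis a 1) (M *v (x + \<alpha> *s axis a 1))" ..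
    then show ?thesis using M by (simp add: psd_iff)
  qed
  show "psd (M - ketbra w w)" unfolding M'_def[symmetric] psd_iff using herm' form by blast
  have "M' $ a $ j = cadj M' $ a $ j" using herm' by simp
  also have "\<dots> = 0" using column[of j] by (simp add: cadj_def)
  finally show "(M - ketbra w w) $ a $ j = 0" unfolding M'_def .
qed

lemma psd_sum_ketbra_supported:
  assumes "finite I" "psd M" "\<And>i j. i \<notin> I \<Longrightarrow> M $ i $ j = 0"
  shows "\<exists>f (m::nat). M = (\<Sum>k<m. ketbra (f k) (f k))"
  using assms
proof (induction I arbitrary: M rule: finite_induct)
  case empty
  then have "M = 0" by (simp add: vec_eq_iff)
  then show ?case by (intro exI[of _ "\<lambda>_. 0"] exI[of _ 0]) simp
next
  case (insert a I)
  define w :: "complex^'a" where "w = (\<chi> i. M $ i $ a / of_real (sqrt (Re (M $ a $ a))))"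
  note peel = psd_minus_column_ketbra[OF insert.prems(1), of a, folded w_def]
  have "(M - ketbra w w) $ i $ j = 0" if "i \<notin> I" for i j
    using insert.prems(2)[of i] insert.prems(2)[of i a] peel(2)[of j] that
    by (cases "i = a") (auto simp: w_def ketbra_def)
  then obtain f and m :: nat where fm: "M - ketbra w w = (\<Sum>k<m. ketbra (f k) (f k))"
    using insert.IH[OF peel(1)] by blast
  show ?case
  proof (intro exI)
    show "M = (\<Sum>k<Suc m. ketbra ((f(m := w)) k) ((f(m := w)) k))"
      by (simp add: fm[symmetric])
  qed
qed

lemma psd_sum_ketbra: "psd (M::'n::finite cmat) \<Longrightarrow> \<exists>f (m::nat). M = (\<Sum>k<m. ketbra (f k) (f k))"
  using psd_sum_ketbra_supported[of UNIV M] by simp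

lemma psd_tensor:
  assumes A: "psd (A :: 's::finite cmat)" and B: "psd (B :: 'c::finite cmat)"
  shows "psd (tensor A B)"
proof -
  obtain f and m :: nat where f: "A = (\<Sum>k<m. ketbra (f k) (f k))" using psd_sum_ketbra[OF A] by blast
  obtain g and n :: nat where g: "B = (\<Sum>k<n. ketbra (g k) (g k))" using psd_sum_ketbra[OF B] by blast
  have "tensor A B = (\<Sum>l<n. \<Sum>k<m. ketbra (kron (f k) (g l)) (kron (f k) (g l)))"
    by (simp add: f g tensor_sum_left tensor_sum_right tensor_ketbra)
  then show ?thesis by (auto intro!: psd_sum psd_ketbra)
qed

lemma psd_trace_mult_nonneg:
  assumes P: "psd P" and X: "psd X"
  shows "0 \<le> Re (trace (P ** X))"
proof -
  obtain f and m :: nat where f: "P = (\<Sum>k<m. ketbra (f k) (f k))" using psd_sum_ketbra[OF P] by blast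
  have "trace (P ** X) = (\<Sum>k<m. cinner (f k) (X *v f k))"
    by (simp add: f matrix_sum_mult_left trace_sum trace_ketbra_mult)
  then show ?thesis using X by (simp add: Re_sum sum_nonneg psd_iff)
qed

subsection \<open>Exponentials of superoperators\<close>

lemma bounded_linear_funpow_bound:
  assumes "bounded_linear (L :: 'a::real_normed_vector \<Rightarrow> 'a)"
  obtains K where "K > 0" "\<And>k x. norm ((L ^^ k) x) \<le> K ^ k * norm x"
proof -
  obtain K where K: "K > 0" "\<And>x. norm (L x) \<le> norm x * K"
    using bounded_linear.pos_bounded[OF assms] by blast
  have "norm ((L ^^ k) x) \<le> K ^ k * norm x" for k x
  proof (induction k)
    case (Suc k)
    have "norm ((L ^^ Suc k) x) \<le> norm ((L ^^ k) x) * K" using K(2) by simp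
    also have "\<dots> \<le> K ^ k * norm x * K" using Suc K(1) by (intro mult_right_mono) auto
    finally show ?case by (simp add: algebra_simps)
  qed simp
  with K(1) show ?thesis using that by blast
qed

lemma summable_norm_exp_series_funpow:
  assumes "bounded_linear (L :: 'a::real_normed_vector \<Rightarrow> 'a)"
  shows "summable (\<lambda>k. norm ((t ^ k / fact k) *\<^sub>R (L ^^ k) X))"
proof -
  obtain K where K: "K > 0" "\<And>k x. norm ((L ^^ k) x) \<le> K ^ k * norm x"
    using bounded_linear_funpow_bound[OF assms] by blast
  have "norm (norm ((t ^ k / fact k) *\<^sub>R (L ^^ k) X)) \<le> inverse (fact k) * (K * \<bar>t\<bar>) ^ k * norm X" for k
  proof -
    have "norm (norm ((t ^ k / fact k) *\<^sub>R (L ^^ k) X)) = \<bar>t\<bar> ^ k / fact k * norm ((L ^^ k) X)"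
      by (simp add: power_abs)
    also have "\<dots> \<le> \<bar>t\<bar> ^ k / fact k * (K ^ k * norm X)"
      by (intro mult_left_mono K(2)) auto
    finally show ?thesis by (simp add: power_mult_distrib field_simps)
  qed
  moreover have "summable (\<lambda>k. inverse (fact k) * (K * \<bar>t\<bar>) ^ k * norm X)"
    by (intro summable_mult2 summable_exp)
  ultimately show ?thesis by (rule summable_comparison_test'[rotated])
qed

lemma summable_exp_series_funpow:
  assumes "bounded_linear (L :: 'a::banach \<Rightarrow> 'a)"
  shows "summable (\<lambda>k. (t ^ k / fact k) *\<^sub>R (L ^^ k) X)"
  by (rule summable_norm_cancel[OF summable_norm_exp_series_funpow[OF assms]])

lemma superop_exp_0: "superop_exp 0 L X = X"
proof -
  have "(\<lambda>k. ((0::real) ^ k / fact k) *\<^sub>R (L ^^ k) X) = (\<lambda>k. if k = 0 then (L ^^ k) X else 0)"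
    by auto
  then show ?thesis
    using sums_single[of 0 "\<lambda>k. (L ^^ k) X"] by (simp add: superop_exp_def sums_iff)
qed

lemma superop_exp_commute:
  assumes L: "bounded_linear (L :: ('n::finite) cmat \<Rightarrow> 'n cmat)"
  shows "superop_exp t L (L X) = L (superop_exp t L X)"
  unfolding superop_exp_def bounded_linear.suminf[OF L summable_exp_series_funpow[OF L]]
  by (simp add: linear.scaleR[OF bounded_linear.linear[OF L]] funpow_swap1)

lemma superop_exp_functional_power_series:
  assumes L: "bounded_linear (L :: ('n::finite) cmat \<Rightarrow> 'n cmat)"
    and \<phi>: "bounded_linear (\<phi> :: 'n cmat \<Rightarrow> real)"
  shows "\<phi> (superop_exp t L X) = (\<Sum>k. \<phi> ((L ^^ k) X) / fact k * t ^ k)"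
    and "summable (\<lambda>k. \<phi> ((L ^^ k) X) / fact k * t ^ k)"
proof -
  have eq: "\<phi> ((t ^ k / fact k) *\<^sub>R (L ^^ k) X) = \<phi> ((L ^^ k) X) / fact k * t ^ k" for k
    by (simp add: linear.scaleR[OF bounded_linear.linear[OF \<phi>]])
  show "\<phi> (superop_exp t L X) = (\<Sum>k. \<phi> ((L ^^ k) X) / fact k * t ^ k)"
    unfolding superop_exp_def bounded_linear.suminf[OF \<phi> summable_exp_series_funpow[OF L]] eq ..
  show "summable (\<lambda>k. \<phi> ((L ^^ k) X) / fact k * t ^ k)"
    using bounded_linear.summable[OF \<phi> summable_exp_series_funpow[OF L, of t X]] unfolding eq .
qed

lemma superop_exp_functional_has_derivative:
  assumes L: "bounded_linear (L :: ('n::finite) cmat \<Rightarrow> 'n cmat)"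
    and \<phi>: "bounded_linear (\<phi> :: 'n cmat \<Rightarrow> real)"
  shows "((\<lambda>t. \<phi> (superop_exp t L X)) has_real_derivative \<phi> (L (superop_exp t L X))) (at t)"
proof -
  define c where "c k = \<phi> ((L ^^ k) X) / fact k" for k
  have diffs: "diffs c k = \<phi> ((L ^^ k) (L X)) / fact k" for k
    by (simp add: diffs_def c_def funpow_Suc_right fact_Suc del: funpow.simps of_nat_Suc)
  have "((\<lambda>x. \<Sum>n. c n * x^n) has_real_derivative (\<Sum>n. diffs c n * t^n)) (at t)"
    by (rule termdiffs_strong_converges_everywhere)
      (use superop_exp_functional_power_series(2)[OF L \<phi>] in \<open>simp add: c_def\<close>)
  moreover have "(\<lambda>t. \<phi> (superop_exp t L X)) = (\<lambda>x. \<Sum>n. c n * x^n)"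
    by (simp add: c_def superop_exp_functional_power_series(1)[OF L \<phi>])
  moreover have "\<phi> (L (superop_exp t L X)) = (\<Sum>n. diffs c n * t^n)"
    by (simp add: diffs superop_exp_functional_power_series(1)[OF L \<phi>]
        flip: superop_exp_commute[OF L])
  ultimately show ?thesis by simp
qed

text \<open>Expanding both arguments in a basis reduces this to Cauchy products of real series.\<close>

lemma Cauchy_product_sums_bilinear:
  fixes prod :: "'a::euclidean_space \<Rightarrow> 'b::euclidean_space \<Rightarrow> 'c::real_normed_vector"
    and a :: "nat \<Rightarrow> 'a" and b :: "nat \<Rightarrow> 'b"
  assumes "bounded_bilinear prod"
    and a: "summable (\<lambda>k. norm (a k))" and b: "summable (\<lambda>k. norm (b k))"
  shows "(\<lambda>n. \<Sum>i\<le>n. prod (a i) (b (n - i))) sums prod (suminf a) (suminf b)"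
proof -
  interpret bounded_bilinear prod by fact
  have expand: "prod x y = (\<Sum>v\<in>Basis. \<Sum>u\<in>Basis. ((y \<bullet> v) * (x \<bullet> u)) *\<^sub>R prod u v)" for x y
  proof -
    have "prod x y = prod (\<Sum>u\<in>Basis. (x \<bullet> u) *\<^sub>R u) (\<Sum>v\<in>Basis. (y \<bullet> v) *\<^sub>R v)"
      by (simp add: euclidean_representation)
    then show ?thesis by (simp add: sum_left sum_right scaleR_left scaleR_right scaleR_sum_right)
  qed
  have coordinate: "(\<lambda>n. \<Sum>i\<le>n. (b (n - i) \<bullet> v) * (a i \<bullet> u)) sums ((suminf b \<bullet> v) * (suminf a \<bullet> u))"
    if "u \<in> Basis" "v \<in> Basis" for u v
  proof -
    have "summable (\<lambda>k. norm (a k \<bullet> u))"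
      by (rule summable_comparison_test'[OF a]) (simp add: Basis_le_norm that)
    moreover have "summable (\<lambda>k. norm (b k \<bullet> v))"
      by (rule summable_comparison_test'[OF b]) (simp add: Basis_le_norm that)
    ultimately have "(\<lambda>n. \<Sum>i\<le>n. (a i \<bullet> u) * (b (n - i) \<bullet> v)) sums ((\<Sum>k. a k \<bullet> u) * (\<Sum>k. b k \<bullet> v))"
      by (rule Cauchy_product_sums)
    moreover have "(\<Sum>k. a k \<bullet> u) = suminf a \<bullet> u" "(\<Sum>k. b k \<bullet> v) = suminf b \<bullet> v"
      using summable_norm_cancel[OF a] summable_norm_cancel[OF b]
      by (simp_all add: bounded_linear.suminf[OF bounded_linear_inner_left])
    ultimately show ?thesis by (simp only: mult.commute)
  qed
  have "(\<Sum>i\<le>n. prod (a i) (b (n - i)))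
      = (\<Sum>v\<in>Basis. \<Sum>u\<in>Basis. (\<Sum>i\<le>n. (b (n - i) \<bullet> v) * (a i \<bullet> u)) *\<^sub>R prod u v)" for n
  proof -
    have "(\<Sum>i\<le>n. prod (a i) (b (n - i)))
        = (\<Sum>i\<le>n. \<Sum>v\<in>Basis. \<Sum>u\<in>Basis. ((b (n - i) \<bullet> v) * (a i \<bullet> u)) *\<^sub>R prod u v)"
      by (rule sum.cong[OF refl], rule expand)
    also have "\<dots> = (\<Sum>v\<in>Basis. \<Sum>i\<le>n. \<Sum>u\<in>Basis. ((b (n - i) \<bullet> v) * (a i \<bullet> u)) *\<^sub>R prod u v)"
      by (rule sum.swap)
    also have "\<dots> = (\<Sum>v\<in>Basis. \<Sum>u\<in>Basis. \<Sum>i\<le>n. ((b (n - i) \<bullet> v) * (a i \<bullet> u)) *\<^sub>R prod u v)"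
      by (rule sum.cong[OF refl], rule sum.swap)
    finally show ?thesis by (simp only: scaleR_sum_left)
  qed
  moreover have "(\<lambda>n. \<Sum>v\<in>Basis. \<Sum>u\<in>Basis. (\<Sum>i\<le>n. (b (n - i) \<bullet> v) * (a i \<bullet> u)) *\<^sub>R prod u v)
      sums prod (suminf a) (suminf b)"
    unfolding expand[of "suminf a"] by (intro sums_sum sums_scaleR_left coordinate)
  ultimately show ?thesis by simp
qed

fun matpow :: "('n::finite) cmat \<Rightarrow> nat \<Rightarrow> 'n cmat" where
  "matpow A 0 = mat 1"
| "matpow A (Suc k) = A ** matpow A k"

lemma matpow_Suc': "matpow A (Suc k) = matpow A k ** A"
  by (induction k) (simp_all add: matrix_mul_assoc)

lemma cadj_matpow: "cadj (matpow A k) = matpow (cadj A) k"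
  by (induction k) (simp_all add: cadj_mult flip: matpow_Suc')

definition mexp :: "real \<Rightarrow> ('n::finite) cmat \<Rightarrow> 'n cmat" where
  "mexp t A = (\<Sum>k. (t ^ k / fact k) *\<^sub>R matpow A k)"

lemma bounded_linear_mult_left_cmat: "bounded_linear (\<lambda>X. (A::'n::finite cmat) ** X)"
  unfolding linear_conv_bounded_linear[symmetric]
  by (intro linearI) (simp_all add: matrix_add_ldistrib matrix_scalar_ac scalar_matrix_assoc)

lemma bounded_linear_mult_right_cmat: "bounded_linear (\<lambda>X. X ** (B::'n::finite cmat))"
  unfolding linear_conv_bounded_linear[symmetric]
  by (intro linearI) (simp_all add: matrix_add_rdistrib scalar_matrix_assoc)

lemma summable_norm_mexp_series: "summable (\<lambda>k. norm ((t ^ k / fact k) *\<^sub>R matpow A k))"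
proof -
  have "matpow A k = ((\<lambda>X. A ** X) ^^ k) (mat 1)" for k
    by (induction k) simp_all
  then show ?thesis
    using summable_norm_exp_series_funpow[OF bounded_linear_mult_left_cmat, of t A "mat 1"]
    by (simp only:)
qed

lemma cadj_mexp: "cadj (mexp t A) = mexp t (cadj A)"
  unfolding mexp_def bounded_linear.suminf[OF bounded_linear_cadj
      summable_norm_cancel[OF summable_norm_mexp_series]]
  by (simp add: cadj_scaleR cadj_matpow)

definition sylvester_op :: "('n::finite) cmat \<Rightarrow> 'n cmat \<Rightarrow> 'n cmat \<Rightarrow> 'n cmat" where
  "sylvester_op A B X = A ** X + X ** B"

lemma bounded_linear_sylvester_op: "bounded_linear (sylvester_op A B)"
  unfolding sylvester_op_def
  by (intro bounded_linear_add bounded_linear_mult_left_cmat bounded_linear_mult_right_cmat)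

lemma funpow_sylvester_op:
  "(sylvester_op A B ^^ n) X = (\<Sum>k\<le>n. of_nat (n choose k) *\<^sub>R (matpow A k ** X ** matpow B (n - k)))"
proof (induction n)
  case (Suc n)
  define T where "T k m = matpow A k ** X ** matpow B m" for k m
  have step: "sylvester_op A B (T k m) = T (Suc k) m + T k (Suc m)" for k m
    by (simp only: sylvester_op_def T_def matrix_mul_assoc matpow.simps(2)[of A] matpow_Suc'[of B])
  have linear: "sylvester_op A B (\<Sum>k\<le>n. c k *\<^sub>R Y k) = (\<Sum>k\<le>n. c k *\<^sub>R sylvester_op A B (Y k))" for c Y
    using bounded_linear_sylvester_op[of A B]
    by (simp add: linear_sum linear.scaleR bounded_linear.linear)
  define g where "g k = of_nat (n choose k) *\<^sub>R T k (Suc n - k)" for k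
  have "(sylvester_op A B ^^ Suc n) X
      = (\<Sum>k\<le>n. of_nat (n choose k) *\<^sub>R T (Suc k) (n - k)) + (\<Sum>k\<le>n. g k)"
    by (simp add: Suc.IH T_def[symmetric] linear step scaleR_add_right sum.distrib g_def Suc_diff_le)
  also have "(\<Sum>k\<le>n. g k) = (\<Sum>k\<le>Suc n. g k)"
    by (simp add: g_def)
  also have "\<dots> = g 0 + (\<Sum>k\<le>n. g (Suc k))"
    by (rule sum.atMost_Suc_shift)
  also have "(\<Sum>k\<le>n. of_nat (n choose k) *\<^sub>R T (Suc k) (n - k)) + (g 0 + (\<Sum>k\<le>n. g (Suc k)))
      = T 0 (Suc n) + (\<Sum>k\<le>n. of_nat (Suc n choose Suc k) *\<^sub>R T (Suc k) (n - k))"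
    by (simp add: g_def sum.distrib scaleR_add_left)
  also have "\<dots> = (\<Sum>k\<le>Suc n. of_nat (Suc n choose k) *\<^sub>R T k (Suc n - k))"
    by (subst sum.atMost_Suc_shift) simp
  finally show ?case by (simp add: T_def)
qed simp

lemma superop_exp_sylvester_op:
  fixes A B X :: "'n::finite cmat"
  shows "superop_exp t (sylvester_op A B) X = mexp t A ** X ** mexp t B"
proof -
  define a where "a k = (t ^ k / fact k) *\<^sub>R matpow A k" for k
  define b where "b k = (t ^ k / fact k) *\<^sub>R matpow B k" for k
  have bilinear: "bounded_bilinear (\<lambda>P Q. P ** X ** (Q::'n cmat))"
    unfolding bilinear_conv_bounded_bilinear[symmetric] bilinear_def
    by (auto intro!: linearI simp: matrix_add_ldistrib matrix_add_rdistrib matrix_scalar_ac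
        scalar_matrix_assoc)
  have "(\<lambda>n. \<Sum>i\<le>n. a i ** X ** b (n - i)) sums (mexp t A ** X ** mexp t B)"
    unfolding mexp_def a_def b_def
    by (rule Cauchy_product_sums_bilinear[OF bilinear summable_norm_mexp_series
          summable_norm_mexp_series])
  moreover have "(\<Sum>i\<le>n. a i ** X ** b (n - i)) = (t ^ n / fact n) *\<^sub>R (sylvester_op A B ^^ n) X" for n
  proof -
    have "(t ^ n / fact n) * of_nat (n choose k) = (t ^ k / fact k) * (t ^ (n - k) / fact (n - k))"
      if "k \<le> n" for k
      using that by (simp add: binomial_fact power_add[symmetric] field_simps)
    then show ?thesis
      unfolding funpow_sylvester_op scaleR_sum_right
      by (intro sum.cong) (simp_all add: a_def b_def matrix_scalar_ac scalar_matrix_assoc mult_ac)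
  qed
  ultimately show ?thesis by (simp add: superop_exp_def sums_iff)
qed

subsection \<open>The evolution between renewals\<close>

definition expval :: "('n::finite) cmat \<Rightarrow> 'n cmat \<Rightarrow> real" where
  "expval P X = Re (trace (P ** X))"

definition subdensity :: "('n::finite) cmat \<Rightarrow> bool" where
  "subdensity X \<longleftrightarrow> psd X \<and> Re (trace X) \<le> 1"

lemma bounded_linear_expval: "bounded_linear (expval P)"
  unfolding linear_conv_bounded_linear[symmetric] expval_def
  by (intro linearI) (simp_all add: matrix_add_ldistrib trace_add matrix_scalar_ac trace_scaleR flip: scalar_matrix_assoc)

lemma expval_psd_nonneg: "psd P \<Longrightarrow> psd X \<Longrightarrow> 0 \<le> expval P X"
  unfolding expval_def by (rule psd_trace_mult_nonneg)

lemma cadj_VC: "cadj (VC J) = VC J"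
  by (simp add: VC_def cadj_csmult cadj_sum cadj_mult)

lemma psd_VC: "psd (VC J)"
proof -
  have "psd (\<Sum>j\<in>UNIV. cadj (J j) ** mat 1 ** cadj (cadj (J j)))"
    by (intro psd_sum psd_congruence psd_mat1)
  then have "psd (csmult (of_real (1/2)) (\<Sum>j\<in>UNIV. cadj (J j) ** J j))"
    by (intro psd_csmult) simp_all
  then show ?thesis by (simp add: VC_def)
qed

definition Lnore_factor :: "(('s::finite) \<times> ('c::finite)) cmat \<Rightarrow> ('k::finite \<Rightarrow> 'c cmat) \<Rightarrow> ('s \<times> 'c) cmat" where
  "Lnore_factor H J = csmult (- \<i>) H - tensor (mat 1) (VC J)"

lemma Lnore_eq_sylvester_op:
  assumes "hermitian H"
  shows "Lnore H J = sylvester_op (Lnore_factor H J) (cadj (Lnore_factor H J))"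
proof -
  have cadj_factor: "cadj (Lnore_factor H J) = csmult \<i> H - tensor (mat 1) (VC J)"
    using assms
    by (simp add: Lnore_factor_def hermitian_def cadj_diff cadj_csmult cadj_tensor cadj_VC)
  show ?thesis
    unfolding cadj_factor
    by (intro ext) (simp add: Lnore_def sylvester_op_def Lnore_factor_def matrix_diff_ldistrib
        matrix_diff_rdistrib csmult_mult_left csmult_mult_right csmult_diff csmult_uminus
        uminus_matrix_mult)
qed

lemma bounded_linear_Lnore: "hermitian H \<Longrightarrow> bounded_linear (Lnore H J)"
  by (simp add: Lnore_eq_sylvester_op bounded_linear_sylvester_op)

lemma psd_superop_exp_Lnore: "hermitian H \<Longrightarrow> psd X \<Longrightarrow> psd (superop_exp t (Lnore H J) X)"
  by (simp add: Lnore_eq_sylvester_op superop_exp_sylvester_op psd_congruence flip: cadj_mexp)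

lemma trace_Lnore: "trace (Lnore H J Z) = - 2 * trace (tensor (mat 1) (VC J) ** Z)"
  by (simp add: Lnore_def trace_csmult trace_sub trace_add trace_mul_sym[of Z])

lemma trace_superop_exp_Lnore_le:
  assumes H: "hermitian H" and X: "psd X" and t: "0 \<le> t"
  shows "Re (trace (superop_exp t (Lnore H J) X)) \<le> Re (trace X)"
proof -
  have "expval (mat 1) (superop_exp t (Lnore H J) X) \<le> expval (mat 1) (superop_exp 0 (Lnore H J) X)"
  proof (rule DERIV_nonpos_imp_nonincreasing[OF t])
    fix s :: real
    have "expval (mat 1) (Lnore H J (superop_exp s (Lnore H J) X))
        = - 2 * expval (tensor (mat 1) (VC J)) (superop_exp s (Lnore H J) X)"
      by (simp add: expval_def trace_Lnore)
    also have "\<dots> \<le> 0"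
      using expval_psd_nonneg[OF psd_tensor[OF psd_mat1 psd_VC] psd_superop_exp_Lnore[OF H X]] by simp
    finally show "\<exists>y. ((\<lambda>s. expval (mat 1) (superop_exp s (Lnore H J) X)) has_real_derivative y) (at s)
        \<and> y \<le> 0"
      using superop_exp_functional_has_derivative[OF bounded_linear_Lnore[OF H] bounded_linear_expval]
      by blast
  qed
  then show ?thesis by (simp add: expval_def superop_exp_0)
qed

lemma subdensity_superop_exp_Lnore:
  assumes "hermitian H" "subdensity X" "0 \<le> t"
  shows "subdensity (superop_exp t (Lnore H J) X)"
proof -
  have X: "psd X" "Re (trace X) \<le> 1" using assms(2) by (simp_all add: subdensity_def)
  show ?thesis
    using psd_superop_exp_Lnore[OF assms(1) X(1), where J = J]
      order_trans[OF trace_superop_exp_Lnore_le[OF assms(1) X(1) assms(3), where J = J] X(2)]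
    by (simp add: subdensity_def)
qed

lemma continuous_on_expval_superop_exp_Lnore:
  assumes "hermitian H"
  shows "continuous_on S (\<lambda>t. expval P (superop_exp t (Lnore H J) X))"
  by (rule continuous_at_imp_continuous_on, intro ballI DERIV_isCont)
    (rule superop_exp_functional_has_derivative[OF bounded_linear_Lnore[OF assms] bounded_linear_expval])

lemma psd_Dre: "psd X \<Longrightarrow> psd (Dre J X)"
  unfolding Dre_def by (auto intro!: psd_sum psd_congruence)

text \<open>A renewed state has trace 1, or is the zero matrix (division by zero) if the jump
  had probability zero.\<close>

lemma subdensity_rho_ren:
  assumes "hermitian H" "density rhoS0" "density rho0"
  shows "subdensity (rho_ren H J rhoS0 rho0 tau l)"
proof (induction l)
  case 0
  show ?case using assms by (simp add: subdensity_def density_def psd_tensor trace_tensor)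
next
  case (Suc l)
  define Y where "Y = Dre J (superop_exp (tau (Suc l) - tau l) (Lnore H J) (rho_ren H J rhoS0 rho0 tau l))"
  have Y: "psd Y"
    using Suc assms(1) by (auto simp: Y_def subdensity_def intro!: psd_Dre psd_superop_exp_Lnore)
  obtain y where y: "trace Y = of_real y" "0 \<le> y" using psd_trace[OF Y] by blast
  have "psd (csmult (of_real (1 / y)) Y)"
    using y(2) by (intro psd_csmult Y) simp
  moreover have "Re (trace (csmult (of_real (1 / y)) Y)) \<le> 1"
    using y by (cases "y = 0") (simp_all add: trace_csmult)
  moreover have "rho_ren H J rhoS0 rho0 tau (Suc l) = csmult (of_real (1 / y)) Y"
    by (simp add: Y_def[symmetric] Let_def y)
  ultimately show ?case by (simp add: subdensity_def)
qed

lemma trace_Dre: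
  fixes Z :: "('s::finite \<times> 'c::finite) cmat"
  shows "trace (Dre J Z) = trace (tensor (mat 1 :: 's cmat) (csmult 2 (VC J)) ** Z)"
proof -
  have "trace (tensor (mat 1) (J j) ** Z ** cadj (tensor (mat 1 :: 's cmat) (J j)))
      = trace (tensor (mat 1) (cadj (J j) ** J j) ** Z)" for j
  proof -
    have "trace (tensor (mat 1) (J j) ** Z ** cadj (tensor (mat 1 :: 's cmat) (J j)))
        = trace (cadj (tensor (mat 1 :: 's cmat) (J j)) ** tensor (mat 1) (J j) ** Z)"
      by (simp add: trace_mul_sym[of _ "cadj _"] matrix_mul_assoc)
    then show ?thesis by (simp add: cadj_tensor tensor_mult)
  qed
  then have "trace (Dre J Z) = trace (tensor (mat 1 :: 's cmat) (\<Sum>j\<in>UNIV. cadj (J j) ** J j) ** Z)"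
    by (simp add: Dre_def trace_sum matrix_sum_mult_left tensor_sum_right)
  then show ?thesis by (simp add: VC_def csmult_csmult)
qed

subsection \<open>Spectral decomposition of V_C\<close>

lemma sum_ketbra_orthonormal:
  fixes vv :: "'c::finite \<Rightarrow> complex^'c"
  assumes "\<forall>i j. cinner (vv i) (vv j) = (if i = j then 1 else 0)"
  shows "(\<Sum>j\<in>UNIV. ketbra (vv j) (vv j)) = mat 1"
proof -
  define U :: "'c cmat" where "U = (\<chi> i j. vv j $ i)"
  have "cadj U ** U = mat 1"
    using assms by (simp add: U_def cadj_def matrix_matrix_mult_def cinner_def mat_def vec_eq_iff)
  then have "U ** cadj U = mat 1" by (simp add: matrix_left_right_inverse)
  moreover have "U ** cadj U = (\<Sum>j\<in>UNIV. ketbra (vv j) (vv j))"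
    by (simp add: U_def cadj_def matrix_matrix_mult_def ketbra_def vec_eq_iff sum_component)
  ultimately show ?thesis by simp
qed

lemma opnorm_nonneg: "0 \<le> opnorm M"
  unfolding opnorm_def by (rule onorm_pos_le[OF matrix_vector_mul_bounded_linear])

lemma eigenvalue_le_opnorm:
  assumes "M *v x = r *\<^sub>R x" "norm x = 1"
  shows "r \<le> opnorm M"
proof -
  have "norm (M *v x) \<le> opnorm M * norm x"
    unfolding opnorm_def by (rule onorm[OF matrix_vector_mul_bounded_linear])
  with assms show ?thesis by simp
qed

context
  fixes vv :: "'c::finite \<Rightarrow> complex^'c" and v :: "'c \<Rightarrow> real" and J :: "'k::finite \<Rightarrow> 'c cmat"
  assumes spec_onb: "\<forall>i j. cinner (vv i) (vv j) = (if i = j then 1 else 0)"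
    and spec_dec: "VC J = (\<Sum>j\<in>UNIV. csmult (complex_of_real (v j)) (ketbra (vv j) (vv j)))"
begin

lemma spectral_value_le_opnorm: "v j \<le> opnorm (VC J)"
proof (rule eigenvalue_le_opnorm)
  have "VC J *v vv j = (\<Sum>k\<in>UNIV. (complex_of_real (v k) * cinner (vv k) (vv j)) *s vv k)"
    by (simp add: spec_dec sum_matrix_vector_mult csmult_matrix_vector_mult ketbra_matrix_vector_mult
        vector_smult_assoc)
  also have "\<dots> = (\<Sum>k\<in>UNIV. if k = j then complex_of_real (v j) *s vv j else 0)"
    by (rule sum.cong) (auto simp: spec_onb)
  also have "\<dots> = complex_of_real (v j) *s vv j"
    by simp
  finally show "VC J *v vv j = v j *\<^sub>R vv j"
    by (simp only: vec_eq_iff vector_scaleR_component vector_smult_component)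
      (simp add: scaleR_conv_of_real)
  have "complex_of_real ((norm (vv j))\<^sup>2) = cinner (vv j) (vv j)"
    by (rule cinner_self[symmetric])
  also have "\<dots> = 1" using spec_onb by simp
  finally have "(norm (vv j))\<^sup>2 = 1\<^sup>2" by (simp only: of_real_eq_1_iff power_one)
  then show "norm (vv j) = 1" by (rule power2_eq_imp_eq) simp_all
qed

lemma trace_Dre_spectral:
  fixes X :: "('s::finite \<times> 'c) cmat"
  shows "Re (trace (Dre J X)) = 2 * (\<Sum>j\<in>UNIV. v j * expval (tensor (mat 1 :: 's cmat) (ketbra (vv j) (vv j))) X)"
  by (simp add: trace_Dre tensor_csmult_right spec_dec tensor_sum_right csmult_sum csmult_csmult
      csmult_mult_left matrix_sum_mult_left trace_sum trace_csmult expval_def Re_sum sum_distrib_left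
      mult.assoc)

lemma sum_expval_spectral_projections:
  fixes X :: "('s::finite \<times> 'c) cmat"
  shows "(\<Sum>j\<in>UNIV. expval (tensor (mat 1 :: 's cmat) (ketbra (vv j) (vv j))) X) = Re (trace X)"
proof -
  have "(\<Sum>j\<in>UNIV. expval (tensor (mat 1 :: 's cmat) (ketbra (vv j) (vv j))) X)
      = Re (trace ((\<Sum>j\<in>UNIV. tensor (mat 1 :: 's cmat) (ketbra (vv j) (vv j))) ** X))"
    by (simp add: expval_def Re_sum trace_sum matrix_sum_mult_left)
  also have "(\<Sum>j\<in>UNIV. tensor (mat 1 :: 's cmat) (ketbra (vv j) (vv j))) = mat 1"
    by (simp add: tensor_mat1 sum_ketbra_orthonormal[OF spec_onb] flip: tensor_sum_right)
  finally show ?thesis by simp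
qed

end

subsection \<open>Inequalities between weighted means\<close>

lemma weighted_mean_le_sqrt_weighted_mean_square:
  fixes v p :: "'a \<Rightarrow> real"
  assumes "finite A" and p: "\<And>j. j \<in> A \<Longrightarrow> 0 \<le> p j" and total: "sum p A \<le> 1"
  shows "(\<Sum>j\<in>A. v j * p j) \<le> sqrt (\<Sum>j\<in>A. (v j)\<^sup>2 * p j)"
proof -
  define m where "m = (\<Sum>j\<in>A. v j * p j)"
  have "0 \<le> (\<Sum>j\<in>A. (v j - m)\<^sup>2 * p j)" using p by (auto intro!: sum_nonneg)
  also have "\<dots> = (\<Sum>j\<in>A. (v j)\<^sup>2 * p j) - 2 * m * m + m\<^sup>2 * sum p A"
    by (simp add: m_def power2_diff algebra_simps sum.distrib sum_subtractf sum_distrib_left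
        sum_distrib_right)
  also have "\<dots> \<le> (\<Sum>j\<in>A. (v j)\<^sup>2 * p j) - m\<^sup>2"
    using mult_left_mono[OF total, of "m\<^sup>2"] by (simp add: power2_eq_square)
  finally show ?thesis unfolding m_def[symmetric] by (intro real_le_rsqrt) simp
qed

text \<open>Integrate sqrt f \<le> f / (2 c) + c / 2 and take c = sqrt (I / T); the choice
  c = sqrt ((I + e) / (T + e)) with e \<rightarrow> 0 also covers I = 0 and T = 0.\<close>

lemma integral_sqrt_le_sqrt_integral:
  fixes f :: "real \<Rightarrow> real"
  assumes f: "continuous_on {0..T} f" "\<And>t. t \<in> {0..T} \<Longrightarrow> 0 \<le> f t" and T: "0 \<le> T"
  shows "integral {0..T} (\<lambda>t. sqrt (f t)) \<le> sqrt (T * integral {0..T} f)"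
proof -
  define I where "I = integral {0..T} f"
  define S where "S = integral {0..T} (\<lambda>t. sqrt (f t))"
  have I: "0 \<le> I"
    unfolding I_def by (rule integral_nonneg[OF integrable_continuous_interval[OF f(1)] f(2)])
  have bound: "S \<le> I / (2 * c) + T * c / 2" if c: "0 < c" for c
  proof -
    have "sqrt (f t) \<le> f t / (2 * c) + c / 2" if "t \<in> {0..T}" for t
    proof -
      have "0 \<le> (sqrt (f t) - c)\<^sup>2" by simp
      with f(2)[OF that] c show ?thesis by (simp add: power2_diff field_simps power2_eq_square)
    qed
    then have "S \<le> integral {0..T} (\<lambda>t. f t / (2 * c) + c / 2)"
      unfolding S_def
      by (intro integral_le integrable_continuous_interval continuous_intros f(1)) (use c in auto)
    also have "\<dots> = integral {0..T} (\<lambda>t. f t / (2 * c)) + integral {0..T} (\<lambda>t. c / 2)"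
      by (intro integral_add integrable_continuous_interval continuous_intros f(1)) (use c in auto)
    also have "\<dots> = I / (2 * c) + T * c / 2"
      using T by (simp add: I_def content_real)
    finally show ?thesis .
  qed
  have approx: "S \<le> sqrt ((T + e) * (I + e))" if e: "0 < e" for e
  proof -
    define x y where "x = sqrt (I + e)" and "y = sqrt (T + e)"
    have xy: "0 < x" "0 < y" "x\<^sup>2 = I + e" "y\<^sup>2 = T + e"
      using I T e by (simp_all add: x_def y_def)
    have "S \<le> I / (2 * (x / y)) + T * (x / y) / 2"
      using bound[of "x / y"] xy by simp
    also have "\<dots> \<le> x\<^sup>2 / (2 * (x / y)) + y\<^sup>2 * (x / y) / 2"
      using xy e by (intro add_mono divide_right_mono mult_right_mono) auto
    also have "\<dots> = x * y"
      using xy(1,2) by (simp add: field_simps power2_eq_square)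
    also have "\<dots> = sqrt ((T + e) * (I + e))"
      by (simp add: x_def y_def real_sqrt_mult)
    finally show ?thesis .
  qed
  have "\<forall>\<^sub>F e in at_right 0. S \<le> sqrt ((T + e) * (I + e))"
    using eventually_at_right_less[of "0::real"] by eventually_elim (rule approx)
  moreover have "((\<lambda>e. sqrt ((T + e) * (I + e))) \<longlongrightarrow> sqrt ((T + 0) * (I + 0))) (at_right 0)"
    by (intro tendsto_intros)
  ultimately have "S \<le> sqrt ((T + 0) * (I + 0))"
    by (intro tendsto_lowerbound[where F = "at_right 0"]) auto
  then show ?thesis by (simp add: S_def I_def)
qed

lemma sqrt_mult_le_powr:
  fixes a b :: real
  assumes "0 \<le> b" "b \<le> a"
  shows "sqrt (a * b) \<le> a powr (3/4) * b powr (1/4)"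
proof -
  have "sqrt (a * b) = (a * b) powr (1/2)"
    using assms by (simp add: powr_half_sqrt)
  also have "\<dots> = a powr (1/2) * (b powr (1/4) * b powr (1/4))"
    using assms by (simp add: powr_mult flip: powr_add)
  also have "\<dots> \<le> a powr (1/2) * (b powr (1/4) * a powr (1/4))"
    using assms by (intro mult_left_mono powr_mono2) auto
  also have "\<dots> = a powr (3/4) * b powr (1/4)"
    by (simp add: algebra_simps flip: powr_add)
  finally show ?thesis .
qed

lemma integral_weighted_means_bounds:
  fixes p :: "'j \<Rightarrow> real \<Rightarrow> real" and v :: "'j \<Rightarrow> real"
  assumes "finite A" and T: "0 \<le> T" and N: "0 \<le> N"
    and cont: "\<And>j. j \<in> A \<Longrightarrow> continuous_on {0..T} (p j)"
    and p: "\<And>j t. j \<in> A \<Longrightarrow> t \<in> {0..T} \<Longrightarrow> 0 \<le> p j t"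
    and total: "\<And>t. t \<in> {0..T} \<Longrightarrow> (\<Sum>j\<in>A. p j t) \<le> 1"
    and v: "\<And>j. j \<in> A \<Longrightarrow> 0 \<le> v j" and vN: "\<And>j. j \<in> A \<Longrightarrow> v j \<le> N"
  defines "W \<equiv> integral {0..T} (\<lambda>t. \<Sum>j\<in>A. v j * p j t)"
  shows "0 \<le> W"
    and "W \<le> integral {0..T} (\<lambda>t. sqrt (\<Sum>j\<in>A. (v j)\<^sup>2 * p j t))"
    and "integral {0..T} (\<lambda>t. sqrt (\<Sum>j\<in>A. (v j)\<^sup>2 * p j t)) \<le> (N * T) powr (3/4) * W powr (1/4)"
proof -
  define w1 where "w1 t = (\<Sum>j\<in>A. v j * p j t)" for t
  define w2 where "w2 t = (\<Sum>j\<in>A. (v j)\<^sup>2 * p j t)" for t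
  have cont_w: "continuous_on {0..T} w1" "continuous_on {0..T} w2"
    unfolding w1_def w2_def by (intro continuous_intros cont; assumption)+
  have w1_nonneg: "0 \<le> w1 t" if "t \<in> {0..T}" for t
    unfolding w1_def using p v that by (auto intro!: sum_nonneg)
  have w2_le: "w2 t \<le> N * w1 t" if "t \<in> {0..T}" for t
    unfolding w1_def w2_def sum_distrib_left power2_eq_square
    using p v vN that by (intro sum_mono) (auto simp: mult.assoc intro!: mult_right_mono)
  have w1_le: "w1 t \<le> N" if "t \<in> {0..T}" for t
  proof -
    have "w1 t \<le> (\<Sum>j\<in>A. N * p j t)"
      unfolding w1_def using p vN that by (intro sum_mono mult_right_mono) auto
    also have "\<dots> \<le> N"
      using mult_left_le[OF total[OF that] N] by (simp add: sum_distrib_left)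
    finally show ?thesis .
  qed
  have W_def': "W = integral {0..T} w1" by (simp add: W_def w1_def[abs_def])
  show W_nonneg: "0 \<le> W"
    unfolding W_def' by (rule integral_nonneg[OF integrable_continuous_interval[OF cont_w(1)] w1_nonneg])
  have "W \<le> integral {0..T} (\<lambda>t. N)"
    unfolding W_def' by (intro integral_le integrable_continuous_interval cont_w continuous_intros w1_le)
  then have W_le: "W \<le> N * T" using T by (simp add: content_real mult.commute)
  show "W \<le> integral {0..T} (\<lambda>t. sqrt (\<Sum>j\<in>A. (v j)\<^sup>2 * p j t))"
    unfolding W_def' w2_def[symmetric]
    by (intro integral_le integrable_continuous_interval cont_w continuous_intros)
      (auto simp: w1_def w2_def intro!: weighted_mean_le_sqrt_weighted_mean_square assms)
  have "integral {0..T} (\<lambda>t. sqrt (w2 t)) \<le> integral {0..T} (\<lambda>t. sqrt (N * w1 t))"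
    by (intro integral_le integrable_continuous_interval cont_w continuous_intros)
      (simp add: w2_le)
  also have "\<dots> \<le> sqrt (T * integral {0..T} (\<lambda>t. N * w1 t))"
    using w1_nonneg N by (intro integral_sqrt_le_sqrt_integral T continuous_intros cont_w) auto
  also have "\<dots> = sqrt ((N * T) * W)"
    by (simp add: W_def' mult_ac)
  also have "\<dots> \<le> (N * T) powr (3/4) * W powr (1/4)"
    using W_nonneg W_le by (rule sqrt_mult_le_powr)
  finally show "integral {0..T} (\<lambda>t. sqrt (\<Sum>j\<in>A. (v j)\<^sup>2 * p j t)) \<le> (N * T) powr (3/4) * W powr (1/4)"
    by (simp add: w2_def)
qed

theorem lemma15:
  fixes H :: "('s::finite \<times> 'c::finite) cmat"
    and J :: "'k::finite \<Rightarrow> 'c cmat"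
    and rho0 :: "'c cmat" and rhoS0 :: "'s cmat"
    and v :: "'c \<Rightarrow> real" and vv :: "'c \<Rightarrow> complex^'c"
    and tau :: "nat \<Rightarrow> real"
    and T :: real and l :: nat
  assumes H_herm: "hermitian H" and H_min0: "smallest_eig_zero H"
    and spec_onb: "\<forall>i j. cinner (vv i) (vv j) = (if i = j then 1 else 0)"
    and spec_dec: "VC J = (\<Sum>j\<in>UNIV. csmult (complex_of_real (v j)) (ketbra (vv j) (vv j)))"
    and v_nonneg: "\<forall>j. 0 \<le> v j"
    and rho0_dens: "density rho0"
    and renewal: "\<forall>\<sigma>. density \<sigma> \<longrightarrow>
          (\<exists>c::real. 0 \<le> c \<and> (\<Sum>j\<in>UNIV. J j ** \<sigma> ** cadj (J j)) = csmult (complex_of_real c) rho0)"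
    and rhoS0_dens: "density rhoS0"
    and tau0: "tau 0 = 0" and tau_mono: "strict_mono tau"
    and T_nonneg: "0 \<le> T"
  shows "(1/2) * integral {0..T} (\<lambda>t. Pjump H J rhoS0 rho0 tau l t)
           = integral {0..T} (\<lambda>t. wnorm H J rhoS0 rho0 tau v vv 1 l t)
       \<and> integral {0..T} (\<lambda>t. wnorm H J rhoS0 rho0 tau v vv 1 l t)
           \<le> eps_quality H J rhoS0 rho0 tau v vv l T
       \<and> eps_quality H J rhoS0 rho0 tau v vv l T
           \<le> (opnorm (VC J) * T) powr (3/4)
             * (integral {0..T} (\<lambda>t. wnorm H J rhoS0 rho0 tau v vv 1 l t)) powr (1/4)
       \<and> (opnorm (VC J) * T) powr (3/4)
             * (integral {0..T} (\<lambda>t. wnorm H J rhoS0 rho0 tau v vv 1 l t)) powr (1/4)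
           = (opnorm (VC J) * T) powr (3/4) / 2 powr (1/4)
             * (integral {0..T} (\<lambda>t. Pjump H J rhoS0 rho0 tau l t)) powr (1/4)"
proof -
  define R where "R = rho_ren H J rhoS0 rho0 tau l"
  define p where "p j t = pj H J rhoS0 rho0 tau vv j l t" for j t
  have p_expval: "p j t = expval (tensor (mat 1) (ketbra (vv j) (vv j))) (superop_exp t (Lnore H J) R)"
    for j t by (simp add: p_def pj_def expval_def rho_ev_def R_def)
  have R: "subdensity R" unfolding R_def by (rule subdensity_rho_ren[OF H_herm rhoS0_dens rho0_dens])
  have p_nonneg: "0 \<le> p j t" for j t
    using R by (simp add: p_expval subdensity_def expval_psd_nonneg psd_tensor psd_mat1 psd_ketbra
        psd_superop_exp_Lnore[OF H_herm])
  have p_total: "(\<Sum>j\<in>UNIV. p j t) \<le> 1" if "t \<in> {0..T}" for t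
    using subdensity_superop_exp_Lnore[OF H_herm R, where J = J] that
    by (simp add: p_expval sum_expval_spectral_projections[OF spec_onb spec_dec] subdensity_def)
  have p_cont: "continuous_on {0..T} (p j)" for j
    unfolding p_expval by (rule continuous_on_expval_superop_exp_Lnore[OF H_herm])
  note bounds = integral_weighted_means_bounds[OF finite T_nonneg opnorm_nonneg p_cont p_nonneg p_total
      v_nonneg[rule_format] spectral_value_le_opnorm[OF spec_onb spec_dec]]
  have "(\<lambda>t. wnorm H J rhoS0 rho0 tau v vv 1 l t) = (\<lambda>t. \<Sum>j\<in>UNIV. v j * p j t)"
    using p_nonneg v_nonneg by (simp add: wnorm_def p_def sum_nonneg)
  moreover have "eps_quality H J rhoS0 rho0 tau v vv l T
      = integral {0..T} (\<lambda>t. sqrt (\<Sum>j\<in>UNIV. (v j)\<^sup>2 * p j t))"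
    using p_nonneg by (simp add: eps_quality_def wnorm_def p_def sum_nonneg powr_half_sqrt)
  moreover have "(\<lambda>t. Pjump H J rhoS0 rho0 tau l t) = (\<lambda>t. 2 * (\<Sum>j\<in>UNIV. v j * p j t))"
    by (simp add: Pjump_def trace_Dre_spectral[OF spec_onb spec_dec] p_expval rho_ev_def R_def)
  ultimately show ?thesis using bounds by (simp add: powr_mult)
qed

end
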